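(* Let $N\ge1$, $R>0$, $m>1$, $p>1$, $\alpha,\beta\in\mathbb R$. Let $a:[0,\infty)\to(0,\infty)$ be continuous with $c_1\le a(t)\le c_2$ for all $t\ge 0$, for some constants $0<c_1\le c_2$, and let $g:[0,\infty)\to[0,\infty)$ be continuous. If $$\gamma>0,\qquad N+\beta>0,\qquad \beta-\alpha+m\le 0,$$ then the problem $$-\Big(\frac{r^{N+\alpha-1}|v'(r)|^{m-2}v'(r)}{(a(r)+g(v(r)))^\gamma}\Big)'=r^{N+\beta-1}v^p(r),\ 0<r<R,\qquad v'(0)=0,\ v(R)=0,$$ has no positive solutions.
   Context: A positive solution is a function $v$, positive on $[0,R)$, with $v\in C^1[0,R)\cap C[0,R]$, such that $r\mapsto r^{N+\alpha-1}|v'(r)|^{m-2}v'(r)\,[a(r)+g(v(r))]^{-\gamma}$ belongs to $C^1(0,R)$ and $v$ satisfies the displayed equation and boundary conditions. *)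

theory Defs
  imports "HOL-Analysis.Analysis"
begin

definition flux :: "nat \<Rightarrow> real \<Rightarrow> real \<Rightarrow> real \<Rightarrow> (real \<Rightarrow> real) \<Rightarrow> (real \<Rightarrow> real)
    \<Rightarrow> (real \<Rightarrow> real) \<Rightarrow> (real \<Rightarrow> real) \<Rightarrow> real \<Rightarrow> real" where
  "flux N \<alpha> m \<gamma> a g v v' r =
     r powr (real N + \<alpha> - 1) * \<bar>v' r\<bar> powr (m - 2) * v' r / (a r + g (v r)) powr \<gamma>"

definition positive_solution :: "nat \<Rightarrow> real \<Rightarrow> real \<Rightarrow> real \<Rightarrow> real \<Rightarrow> real
    \<Rightarrow> (real \<Rightarrow> real) \<Rightarrow> (real \<Rightarrow> real) \<Rightarrow> real \<Rightarrow> (real \<Rightarrow> real) \<Rightarrow> bool" where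
  "positive_solution N \<alpha> \<beta> m p \<gamma> a g R v \<longleftrightarrow>
     (\<forall>r\<in>{0..<R}. v r > 0) \<and>
     continuous_on {0..R} v \<and>
     (\<exists>v'. (\<forall>r\<in>{0..<R}. (v has_real_derivative v' r) (at r within {0..<R})) \<and>
           continuous_on {0..<R} v' \<and>
           v' 0 = 0 \<and>
           (\<exists>w'. (\<forall>r\<in>{0<..<R}. (flux N \<alpha> m \<gamma> a g v v' has_real_derivative w' r) (at r)) \<and>
                 continuous_on {0<..<R} w' \<and>
                 (\<forall>r\<in>{0<..<R}. - w' r = r powr (real N + \<beta> - 1) * v r powr p))) \<and>
     v R = 0"

end

theory Submission
  imports Defs
begin

text \<open>
  Write \<open>\<Phi>\<close> for the flux. Since \<open>v'\<close> is bounded near \<open>0\<close> and \<open>N + \<alpha> - 1 > 0\<close>, \<open>\<Phi>(0+) = 0\<close>;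
  as \<open>-\<Phi>\<close> is increasing, \<open>\<Phi> \<le> 0\<close>, so \<open>v' \<le> 0\<close> and \<open>v\<close> is decreasing. Integrating the
  equation and using monotonicity of \<open>v\<close> gives \<open>-\<Phi>(t) \<ge> v(t)\<^sup>p t\<^bsup>N+\<beta>\<^esup> / (N + \<beta>)\<close>, and since
  \<open>a + g(v) \<ge> c\<^sub>1\<close> this turns into \<open>|v'(t)|\<^bsup>m-1\<^esup> \<ge> C v(t)\<^sup>p t\<^bsup>\<beta>-\<alpha>+1\<^esup>\<close>. As \<open>v\<close> decreases
  and \<open>\<beta> - \<alpha> + m \<le> 0\<close>, this means \<open>-v'(t) \<ge> D / t\<close> on some \<open>(0, r]\<close>, so \<open>v\<close> grows like
  \<open>-D ln t\<close> at \<open>0\<close>, contradicting the continuity of \<open>v\<close> at \<open>0\<close>.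
\<close>

lemma abs_powr_diff_mult_abs: "\<bar>x\<bar> powr (m - 2) * \<bar>x\<bar> = \<bar>x\<bar> powr (m - 1)" for x m :: real
proof (cases "x = 0")
  case False
  then have "\<bar>x\<bar> powr (m - 2) * \<bar>x\<bar> powr 1 = \<bar>x\<bar> powr (m - 2 + 1)"
    by (simp only: powr_add)
  then show ?thesis by simp
qed simp

lemma abs_powr_diff_mult_nonpos:
  fixes x m :: real
  assumes "x \<le> 0"
  shows "\<bar>x\<bar> powr (m - 2) * x = - (\<bar>x\<bar> powr (m - 1))"
proof -
  have "x = - \<bar>x\<bar>" using assms by simp
  then have "\<bar>x\<bar> powr (m - 2) * x = - (\<bar>x\<bar> powr (m - 2) * \<bar>x\<bar>)"
    by (metis mult_minus_right)
  then show ?thesis by (simp add: abs_powr_diff_mult_abs)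
qed

lemma tendsto_powr_at_right_0:
  fixes e :: real
  assumes "0 < e"
  shows "((\<lambda>s. s powr e) \<longlongrightarrow> 0) (at_right 0)"
  by (rule tendsto_zero_powrI[where b = e])
    (auto intro: tendsto_ident_at eventually_at_rightI[where b = 1] simp: assms)

lemma DERIV_nonneg_imp_limit_at_right_le:
  fixes G G' :: "real \<Rightarrow> real"
  assumes "a < t" and lim: "(G \<longlongrightarrow> L) (at_right a)"
    and deriv: "\<And>x. a < x \<Longrightarrow> x \<le> t \<Longrightarrow> (G has_real_derivative G' x) (at x)"
    and nonneg: "\<And>x. a < x \<Longrightarrow> x < t \<Longrightarrow> 0 \<le> G' x"
  shows "L \<le> G t"
proof (rule tendsto_le[OF _ tendsto_const lim])
  show "\<forall>\<^sub>F s in at_right a. G s \<le> G t"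
  proof (rule eventually_at_rightI[OF _ \<open>a < t\<close>])
    fix s assume s: "s \<in> {a<..<t}"
    have "continuous_on {s..t} G"
    proof (intro continuous_at_imp_continuous_on ballI)
      fix x assume "x \<in> {s..t}"
      then show "isCont G x" using s deriv[of x] by (auto intro: DERIV_isCont)
    qed
    then show "G s \<le> G t"
    proof (rule DERIV_nonneg_imp_increasing_open[rotated 2])
      fix x assume "s < x" "x < t"
      then show "\<exists>y. (G has_real_derivative y) (at x) \<and> 0 \<le> y"
        using s deriv nonneg by (intro exI[of _ "G' x"]) auto
    qed (use s in auto)
  qed
qed simp

lemma DERIV_ge_mult_powr_imp_ge:
  fixes G G' :: "real \<Rightarrow> real"
  assumes "0 < k" and "0 < t" and lim: "(G \<longlongrightarrow> 0) (at_right 0)"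
    and deriv: "\<And>x. 0 < x \<Longrightarrow> x \<le> t \<Longrightarrow> (G has_real_derivative G' x) (at x)"
    and ge: "\<And>x. 0 < x \<Longrightarrow> x < t \<Longrightarrow> c * x powr (k - 1) \<le> G' x"
  shows "c * t powr k / k \<le> G t"
proof -
  let ?H = "\<lambda>x. G x - c * x powr k / k"
  have "(?H \<longlongrightarrow> 0 - c * 0 / k) (at_right 0)"
    by (intro tendsto_intros lim tendsto_powr_at_right_0 \<open>0 < k\<close>) (use \<open>0 < k\<close> in simp)
  then have "0 - c * 0 / k \<le> ?H t"
  proof (rule DERIV_nonneg_imp_limit_at_right_le[OF \<open>0 < t\<close>,
        where G' = "\<lambda>x. G' x - c * x powr (k - 1)"])
    fix x assume x: "0 < x" "x \<le> t"
    show "(?H has_real_derivative G' x - c * x powr (k - 1)) (at x)"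
      using deriv[OF x] x \<open>0 < k\<close> by (auto intro!: derivative_eq_intros)
  next
    show "0 \<le> G' x - c * x powr (k - 1)" if "0 < x" "x < t" for x
      using ge[OF that] by simp
  qed
  then show ?thesis by simp
qed

lemma DERIV_le_neg_inverse_imp_unbounded:
  fixes v v' :: "real \<Rightarrow> real"
  assumes "0 < D" and "0 < r" and cont: "continuous_on {0<..r} v"
    and deriv: "\<And>x. 0 < x \<Longrightarrow> x < r \<Longrightarrow> (v has_real_derivative v' x) (at x)"
    and le: "\<And>x. 0 < x \<Longrightarrow> x < r \<Longrightarrow> v' x \<le> - D / x"
  shows "\<not> bdd_above (v ` {0<..r})"
proof
  assume "bdd_above (v ` {0<..r})"
  then obtain B where "\<forall>x\<in>{0<..r}. v x \<le> B"
    by (auto simp: bdd_above_def)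
  then have B: "\<And>x. 0 < x \<Longrightarrow> x \<le> r \<Longrightarrow> v x \<le> B"
    by simp
  have log_growth: "v r + D * ln r \<le> v e + D * ln e" if e: "0 < e" "e \<le> r" for e
  proof (rule DERIV_nonpos_imp_decreasing_open[OF \<open>e \<le> r\<close>])
    show "continuous_on {e..r} (\<lambda>x. v x + D * ln x)"
      using e by (intro continuous_intros continuous_on_subset[OF cont]) auto
    fix x assume x: "e < x" "x < r"
    have "((\<lambda>x. v x + D * ln x) has_real_derivative v' x + D * (1 / x)) (at x)"
      using deriv[of x] x e by (auto intro!: derivative_eq_intros)
    moreover have "v' x + D * (1 / x) \<le> 0"
      using le[of x] x e by simp
    ultimately show "\<exists>y. ((\<lambda>x. v x + D * ln x) has_real_derivative y) (at x) \<and> y \<le> 0"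
      by blast
  qed
  define e where "e = r * exp (- (B - v r + 1) / D)"
  have "v r \<le> B" using B[of r] \<open>0 < r\<close> by simp
  then have e: "0 < e" "e \<le> r"
    using \<open>0 < r\<close> \<open>0 < D\<close> by (auto simp: e_def mult_le_cancel_left1 divide_nonpos_pos)
  have "D * ln r = D * ln e + (B - v r + 1)"
    using \<open>0 < r\<close> \<open>0 < D\<close> by (simp add: e_def ln_mult field_simps)
  with log_growth[OF e] B[OF e] show False by linarith
qed

locale radial_solution =
  fixes N :: nat and \<alpha> \<beta> m p \<gamma> c R :: real and a g v v' :: "real \<Rightarrow> real"
  assumes R_pos: "0 < R" and m_gt_1: "1 < m" and p_nonneg: "0 \<le> p"
    and \<gamma>_nonneg: "0 \<le> \<gamma>" and c_pos: "0 < c"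
    and N\<alpha>_pos: "0 < real N + \<alpha> - 1" and N\<beta>_pos: "0 < real N + \<beta>"
    and coeff_ge: "\<And>r. 0 \<le> r \<Longrightarrow> r < R \<Longrightarrow> c \<le> a r + g (v r)"
    and v_pos: "\<And>r. 0 \<le> r \<Longrightarrow> r < R \<Longrightarrow> 0 < v r"
    and v_cont: "continuous_on {0..R} v"
    and v_deriv: "\<And>r. 0 < r \<Longrightarrow> r < R \<Longrightarrow> (v has_real_derivative v' r) (at r)"
    and v'_cont: "continuous_on {0..<R} v'"
    and flux_deriv: "\<And>r. 0 < r \<Longrightarrow> r < R \<Longrightarrow>
      (flux N \<alpha> m \<gamma> a g v v' has_real_derivative - (r powr (real N + \<beta> - 1) * v r powr p)) (at r)"
begin

abbreviation \<Phi> :: "real \<Rightarrow> real" where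
  "\<Phi> \<equiv> flux N \<alpha> m \<gamma> a g v v'"

lemma coeff_powr_ge: "0 \<le> r \<Longrightarrow> r < R \<Longrightarrow> c powr \<gamma> \<le> (a r + g (v r)) powr \<gamma>"
  using coeff_ge c_pos \<gamma>_nonneg by (intro powr_mono2) auto

lemma flux_tendsto_0: "(\<Phi> \<longlongrightarrow> 0) (at_right 0)"
proof -
  have "continuous_on {0..R/2} v'"
    using v'_cont R_pos by (elim continuous_on_subset) auto
  from compact_imp_bounded[OF compact_continuous_image[OF this compact_Icc]]
  obtain M where M: "\<And>x. x \<in> {0..R/2} \<Longrightarrow> \<bar>v' x\<bar> \<le> M"
    unfolding bounded_iff by force
  have "\<forall>\<^sub>F s in at_right 0.
      norm (\<bar>v' s\<bar> powr (m - 2) * v' s / (a s + g (v s)) powr \<gamma>) \<le> M powr (m - 1) / c powr \<gamma>"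
  proof (rule eventually_at_rightI[of 0 "R/2"])
    fix s assume s: "s \<in> {0<..<R/2}"
    have "norm (\<bar>v' s\<bar> powr (m - 2) * v' s / (a s + g (v s)) powr \<gamma>)
        = \<bar>v' s\<bar> powr (m - 1) / (a s + g (v s)) powr \<gamma>"
      using coeff_ge[of s] s c_pos by (simp add: abs_mult abs_powr_diff_mult_abs)
    also have "\<dots> \<le> M powr (m - 1) / c powr \<gamma>"
      using M[of s] s m_gt_1 coeff_powr_ge[of s] coeff_ge[of s] c_pos \<gamma>_nonneg
      by (intro frac_le powr_mono2) auto
    finally show "norm (\<bar>v' s\<bar> powr (m - 2) * v' s / (a s + g (v s)) powr \<gamma>)
        \<le> M powr (m - 1) / c powr \<gamma>" .
  qed (use R_pos in simp)
  from lim_null_mult_right_bounded[OF tendsto_powr_at_right_0[OF N\<alpha>_pos] this]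
  show ?thesis
    by (simp add: flux_def[abs_def] mult.assoc)
qed

lemma minus_flux_deriv:
  "0 < r \<Longrightarrow> r < R \<Longrightarrow>
    ((\<lambda>r. - \<Phi> r) has_real_derivative r powr (real N + \<beta> - 1) * v r powr p) (at r)"
  using DERIV_minus[OF flux_deriv[of r]] by simp

lemma flux_nonpos:
  assumes "0 < t" "t < R"
  shows "\<Phi> t \<le> 0"
proof -
  have "- 0 \<le> - \<Phi> t"
    using assms minus_flux_deriv
    by (intro DERIV_nonneg_imp_limit_at_right_le[OF \<open>0 < t\<close> tendsto_minus[OF flux_tendsto_0],
        where G' = "\<lambda>r. r powr (real N + \<beta> - 1) * v r powr p"]) auto
  then show ?thesis by simp
qed

lemma v'_nonpos:
  assumes "0 < t" "t < R"
  shows "v' t \<le> 0"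
proof (rule ccontr)
  assume "\<not> v' t \<le> 0"
  then have "0 < \<Phi> t"
    using coeff_ge[of t] c_pos assms unfolding flux_def
    by (intro divide_pos_pos mult_pos_pos) auto
  with flux_nonpos[OF assms] show False by simp
qed

lemma v_antimono:
  assumes "0 < s" "s \<le> t" "t < R"
  shows "v t \<le> v s"
proof (rule DERIV_nonpos_imp_decreasing_open[OF \<open>s \<le> t\<close>])
  show "continuous_on {s..t} v"
    using continuous_on_subset[OF v_cont, of "{s..t}"] assms by auto
  fix x assume "s < x" "x < t"
  then show "\<exists>y. (v has_real_derivative y) (at x) \<and> y \<le> 0"
    using v_deriv[of x] v'_nonpos[of x] assms by (intro exI[of _ "v' x"]) auto
qed

lemma minus_flux_ge:
  assumes "0 < t" "t < R"
  shows "v t powr p * t powr (real N + \<beta>) / (real N + \<beta>) \<le> - \<Phi> t"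
proof (rule DERIV_ge_mult_powr_imp_ge[OF N\<beta>_pos \<open>0 < t\<close>])
  show "((\<lambda>r. - \<Phi> r) \<longlongrightarrow> 0) (at_right 0)"
    using tendsto_minus[OF flux_tendsto_0] by simp
  show "((\<lambda>r. - \<Phi> r) has_real_derivative r powr (real N + \<beta> - 1) * v r powr p) (at r)"
    if "0 < r" "r \<le> t" for r
    using minus_flux_deriv that assms by simp
  show "v t powr p * r powr (real N + \<beta> - 1) \<le> r powr (real N + \<beta> - 1) * v r powr p"
    if "0 < r" "r < t" for r
    using v_antimono[of r t] v_pos[of t] that assms p_nonneg
    by (simp add: mult.commute powr_mono2)
qed

lemma gradient_lower_bound:
  assumes "0 < t" "t < R"
  shows "c powr \<gamma> * v t powr p * t powr (\<beta> - \<alpha> + 1) / (real N + \<beta>) \<le> \<bar>v' t\<bar> powr (m - 1)"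
proof -
  define A where "A = (a t + g (v t)) powr \<gamma>"
  have A: "c powr \<gamma> \<le> A" "0 < A"
    using coeff_powr_ge[of t] coeff_ge[of t] c_pos assms by (auto simp: A_def)
  have "c powr \<gamma> * v t powr p * t powr (\<beta> - \<alpha> + 1) / (real N + \<beta>)
      = v t powr p * t powr (real N + \<beta>) / (real N + \<beta>) * c powr \<gamma> / t powr (real N + \<alpha> - 1)"
  proof -
    have "\<beta> - \<alpha> + 1 = (real N + \<beta>) - (real N + \<alpha> - 1)" by simp
    then have t_powr: "t powr (\<beta> - \<alpha> + 1) = t powr (real N + \<beta>) / t powr (real N + \<alpha> - 1)"
      by (simp only: powr_diff)
    show ?thesis unfolding t_powr by (simp add: mult_ac)
  qed
  also have "\<dots> \<le> - \<Phi> t * A / t powr (real N + \<alpha> - 1)"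
    using minus_flux_ge[OF assms] flux_nonpos[OF assms] A v_pos[of t] assms N\<beta>_pos
    by (intro divide_right_mono mult_mono) auto
  also have "\<dots> = \<bar>v' t\<bar> powr (m - 1)"
    using abs_powr_diff_mult_nonpos[OF v'_nonpos[OF assms], of m] A assms
    by (simp add: flux_def A_def field_simps)
  finally show ?thesis .
qed

lemma gradient_ge_inverse:
  assumes "\<beta> - \<alpha> + m \<le> 0" and "0 < r" "r < R"
  obtains D where "0 < D" "\<And>t. 0 < t \<Longrightarrow> t \<le> r \<Longrightarrow> D / t \<le> - v' t"
proof
  define E where "E = c powr \<gamma> * v r powr p * r powr (\<beta> - \<alpha> + m) / (real N + \<beta>)"
  define q where "q = 1 / (m - 1)"
  have "0 < E" using v_pos[of r] assms c_pos N\<beta>_pos by (simp add: E_def)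
  then show "0 < E powr q" by simp
  fix t assume t: "0 < t" "t \<le> r"
  have "v r powr p \<le> v t powr p"
    using v_antimono[of t r] v_pos[of r] t assms p_nonneg by (intro powr_mono2) auto
  moreover have "r powr (\<beta> - \<alpha> + m) \<le> t powr (\<beta> - \<alpha> + m)"
    using t assms by (intro powr_mono2') auto
  ultimately have "E \<le> c powr \<gamma> * v t powr p * t powr (\<beta> - \<alpha> + m) / (real N + \<beta>)"
    unfolding E_def using N\<beta>_pos by (intro divide_right_mono mult_mono mult_left_mono) auto
  then have "E * t powr (1 - m)
      \<le> c powr \<gamma> * v t powr p * t powr (\<beta> - \<alpha> + m) / (real N + \<beta>) * t powr (1 - m)"
    by (rule mult_right_mono) simp
  also have "\<dots> = c powr \<gamma> * v t powr p * t powr (\<beta> - \<alpha> + 1) / (real N + \<beta>)"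
  proof -
    have "\<beta> - \<alpha> + 1 = (\<beta> - \<alpha> + m) + (1 - m)" by simp
    then have t_powr: "t powr (\<beta> - \<alpha> + 1) = t powr (\<beta> - \<alpha> + m) * t powr (1 - m)"
      by (simp only: powr_add)
    show ?thesis unfolding t_powr by (simp add: mult_ac)
  qed
  also have "\<dots> \<le> \<bar>v' t\<bar> powr (m - 1)"
    using gradient_lower_bound t assms by simp
  finally have "(E * t powr (1 - m)) powr q \<le> (\<bar>v' t\<bar> powr (m - 1)) powr q"
    using \<open>0 < E\<close> t m_gt_1 by (intro powr_mono2) (auto simp: q_def)
  moreover have "(E * t powr (1 - m)) powr q = E powr q / t"
  proof -
    have "(1 - m) * q = -1" using m_gt_1 by (simp add: q_def field_simps)
    then show ?thesis
      using \<open>0 < E\<close> t by (simp add: powr_mult powr_powr powr_neg_one)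
  qed
  moreover have "(\<bar>v' t\<bar> powr (m - 1)) powr q = - v' t"
    using v'_nonpos[of t] t assms m_gt_1 by (simp add: q_def powr_powr)
  ultimately show "E powr q / t \<le> - v' t" by simp
qed

lemma not_bdd_above_near_0:
  assumes "\<beta> - \<alpha> + m \<le> 0" and "0 < r" "r < R"
  shows "\<not> bdd_above (v ` {0<..r})"
proof -
  obtain D where "0 < D" and D: "\<And>t. 0 < t \<Longrightarrow> t \<le> r \<Longrightarrow> D / t \<le> - v' t"
    using gradient_ge_inverse[OF assms] by blast
  show ?thesis
  proof (rule DERIV_le_neg_inverse_imp_unbounded[OF \<open>0 < D\<close> \<open>0 < r\<close>])
    show "continuous_on {0<..r} v"
      using continuous_on_subset[OF v_cont] \<open>r < R\<close> by (simp add: subset_eq)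
    fix x assume x: "0 < x" "x < r"
    then show "(v has_real_derivative v' x) (at x)" using v_deriv \<open>r < R\<close> by simp
    show "v' x \<le> - D / x" using D[of x] x by simp
  qed
qed

lemma bdd_above_near_0:
  assumes "r \<le> R"
  shows "bdd_above (v ` {0<..r})"
proof (rule bounded_imp_bdd_above[OF bounded_subset])
  show "bounded (v ` {0..R})"
    by (rule compact_imp_bounded[OF compact_continuous_image[OF v_cont compact_Icc]])
  show "v ` {0<..r} \<subseteq> v ` {0..R}"
    using assms by (intro image_mono) auto
qed

end

lemma positive_solution_imp_radial_solution:
  fixes N :: nat and \<alpha> \<beta> m p \<gamma> c R :: real and a g v :: "real \<Rightarrow> real"
  assumes sol: "positive_solution N \<alpha> \<beta> m p \<gamma> a g R v"
    and "0 < R" "1 < m" "0 \<le> p" "0 \<le> \<gamma>" "0 < c"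
    and "0 < real N + \<alpha> - 1" "0 < real N + \<beta>"
    and a_ge: "\<And>t. 0 \<le> t \<Longrightarrow> c \<le> a t" and g_nonneg: "\<And>t. 0 \<le> t \<Longrightarrow> 0 \<le> g t"
  obtains v' where "radial_solution N \<alpha> \<beta> m p \<gamma> c R a g v v'"
proof -
  from sol obtain v' w' where sol_pos: "\<forall>r\<in>{0..<R}. 0 < v r"
    and sol_cont: "continuous_on {0..R} v"
    and sol_deriv: "\<forall>r\<in>{0..<R}. (v has_real_derivative v' r) (at r within {0..<R})"
    and sol_v'_cont: "continuous_on {0..<R} v'"
    and sol_flux_deriv: "\<forall>r\<in>{0<..<R}. (flux N \<alpha> m \<gamma> a g v v' has_real_derivative w' r) (at r)"
    and sol_equation: "\<forall>r\<in>{0<..<R}. - w' r = r powr (real N + \<beta> - 1) * v r powr p"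
    unfolding positive_solution_def by blast
  have "radial_solution N \<alpha> \<beta> m p \<gamma> c R a g v v'"
  proof
    fix r assume r: "0 \<le> r" "r < R"
    then show "0 < v r" using sol_pos by simp
    then have "0 \<le> g (v r)" using g_nonneg by simp
    then show "c \<le> a r + g (v r)" using a_ge[OF r(1)] by linarith
  next
    fix r assume r: "0 < r" "r < R"
    then show "(v has_real_derivative v' r) (at r)"
      using sol_deriv[rule_format, of r] at_within_interior[of r "{0..<R}"] by simp
    show "(flux N \<alpha> m \<gamma> a g v v' has_real_derivative - (r powr (real N + \<beta> - 1) * v r powr p)) (at r)"
      using sol_flux_deriv sol_equation r by (metis greaterThanLessThan_iff minus_minus)
  qed (use assms(2-8) sol_cont sol_v'_cont in simp_all)
  then show ?thesis by (rule that)
qed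

theorem theorem1p3:
  fixes N :: nat and R m p \<alpha> \<beta> \<gamma> c1 c2 :: real and a g :: "real \<Rightarrow> real"
  assumes "N \<ge> 1" and "R > 0" and "m > 1" and "p > 1"
    and "continuous_on {0..} a" and "0 < c1" and "c1 \<le> c2"
    and "\<And>t. t \<ge> 0 \<Longrightarrow> c1 \<le> a t \<and> a t \<le> c2"
    and "continuous_on {0..} g" and "\<And>t. t \<ge> 0 \<Longrightarrow> g t \<ge> 0"
    and "\<gamma> > 0" and "real N + \<beta> > 0" and "\<beta> - \<alpha> + m \<le> 0"
  shows "\<not> (\<exists>v. positive_solution N \<alpha> \<beta> m p \<gamma> a g R v)"
proof
  assume "\<exists>v. positive_solution N \<alpha> \<beta> m p \<gamma> a g R v"
  then obtain v where sol: "positive_solution N \<alpha> \<beta> m p \<gamma> a g R v" ..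
  have p: "0 \<le> p" and \<gamma>: "0 \<le> \<gamma>" and N\<alpha>: "0 < real N + \<alpha> - 1"
    using assms(3,4,11,12,13) by linarith+
  have a_ge: "c1 \<le> a t" and g_nonneg: "0 \<le> g t" if "0 \<le> t" for t
    using assms(8,10) that by simp_all
  obtain v' where "radial_solution N \<alpha> \<beta> m p \<gamma> c1 R a g v v'"
    by (rule positive_solution_imp_radial_solution[OF sol assms(2,3) p \<gamma> assms(6) N\<alpha> assms(12)
          a_ge g_nonneg])
  then interpret radial_solution N \<alpha> \<beta> m p \<gamma> c1 R a g v v' .
  have "0 < R/2" "R/2 < R" using assms(2) by simp_all
  then show False
    using not_bdd_above_near_0[OF assms(13), of "R/2"] bdd_above_near_0[of "R/2"] by simp
qed

end
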